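(* Let $G$ be a permutation group admitting a base $B$ of open subgroups such that for every pair $V\subseteq U$ in $B$ the group $N_G(V)/V$ is finite and $(G/U)^V=N_G(V)U/U$. Let $R$ be an associative ring and $M$ an $R\otimes\mathbb Q$-module, considered as an $R\langle G\rangle$-module with trivial $G$-action. Then every essential extension $E$ of $M$ in $\mathrm{Sm}_R(G)$ is a trivial $G$-module. In particular, if $M=M\otimes\mathbb Q$ is an injective $R$-module, then $M$ (with trivial $G$-action) is an injective object of $\mathrm{Sm}_R(G)$.
   Context: A permutation group is a Hausdorff topological group admitting a base of open sets consisting of left and right translates of subgroups. $R\langle G\rangle$ is the group ring ($G$ acts trivially on $R$); $\mathrm{Sm}_R(G)$ is the category of smooth left $R\langle G\rangle$-modules (every element has an open stabilizer). $(G/U)^V$ is the set of $V$-fixed points of $G/U$. An injection $M\hookrightarrow E$ is an essential extension if every non-zero subobject of $E$ meets $M$ non-trivially. *)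

theory Defs
  imports "HOL-Algebra.Group_Action" "HOL-Analysis.Analysis"
begin

definition topological_group :: "('g, 'z) monoid_scheme \<Rightarrow> 'g topology \<Rightarrow> bool" where
  "topological_group G T \<longleftrightarrow>
     group G \<and> topspace T = carrier G \<and>
     continuous_map (prod_topology T T) T (\<lambda>p. fst p \<otimes>\<^bsub>G\<^esub> snd p) \<and>
     continuous_map T T (\<lambda>x. inv\<^bsub>G\<^esub> x)"

definition permutation_group :: "('g, 'z) monoid_scheme \<Rightarrow> 'g topology \<Rightarrow> bool" where
  "permutation_group G T \<longleftrightarrow>
     topological_group G T \<and> Hausdorff_space T \<and>
     (\<exists>\<B>. (\<forall>W\<in>\<B>. openin T W \<and>
              (\<exists>H g. subgroup H G \<and> g \<in> carrier G \<and>
                     (W = g <#\<^bsub>G\<^esub> H \<or> W = H #>\<^bsub>G\<^esub> g))) \<and>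
          (\<forall>W. openin T W \<longrightarrow> (\<forall>x\<in>W. \<exists>U\<in>\<B>. x \<in> U \<and> U \<subseteq> W)))"

definition open_subgroup_base :: "('g, 'z) monoid_scheme \<Rightarrow> 'g topology \<Rightarrow> 'g set set \<Rightarrow> bool" where
  "open_subgroup_base G T B \<longleftrightarrow>
     (\<forall>U\<in>B. subgroup U G \<and> openin T U) \<and>
     (\<forall>W. openin T W \<and> \<one>\<^bsub>G\<^esub> \<in> W \<longrightarrow> (\<exists>U\<in>B. U \<subseteq> W))"

definition normalizer_quotient :: "('g, 'z) monoid_scheme \<Rightarrow> 'g set \<Rightarrow> 'g set set" where
  "normalizer_quotient G V = (\<lambda>n. V #>\<^bsub>G\<^esub> n) ` normalizer G V"

definition fixed_cosets :: "('g, 'z) monoid_scheme \<Rightarrow> 'g set \<Rightarrow> 'g set \<Rightarrow> 'g set set" where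
  "fixed_cosets G U V =
     {C \<in> (\<lambda>g. g <#\<^bsub>G\<^esub> U) ` carrier G. \<forall>v\<in>V. v <#\<^bsub>G\<^esub> C = C}"

definition normalizer_cosets :: "('g, 'z) monoid_scheme \<Rightarrow> 'g set \<Rightarrow> 'g set \<Rightarrow> 'g set set" where
  "normalizer_cosets G U V = (\<lambda>n. n <#\<^bsub>G\<^esub> U) ` normalizer G V"

record ('r, 'e) rmod =
  mcar :: "'e set"
  madd :: "'e \<Rightarrow> 'e \<Rightarrow> 'e"
  mzero :: 'e
  msc :: "'r \<Rightarrow> 'e \<Rightarrow> 'e"

definition is_rmodule :: "('r::ring_1, 'e) rmod \<Rightarrow> bool" where
  "is_rmodule M \<longleftrightarrow>
     mzero M \<in> mcar M \<and>
     (\<forall>x\<in>mcar M. \<forall>y\<in>mcar M. madd M x y \<in> mcar M) \<and>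
     (\<forall>r x. x \<in> mcar M \<longrightarrow> msc M r x \<in> mcar M) \<and>
     (\<forall>x\<in>mcar M. \<forall>y\<in>mcar M. \<forall>z\<in>mcar M. madd M (madd M x y) z = madd M x (madd M y z)) \<and>
     (\<forall>x\<in>mcar M. \<forall>y\<in>mcar M. madd M x y = madd M y x) \<and>
     (\<forall>x\<in>mcar M. madd M (mzero M) x = x) \<and>
     (\<forall>x\<in>mcar M. \<exists>y\<in>mcar M. madd M x y = mzero M) \<and>
     (\<forall>r x y. x \<in> mcar M \<longrightarrow> y \<in> mcar M \<longrightarrow> msc M r (madd M x y) = madd M (msc M r x) (msc M r y)) \<and>
     (\<forall>r s x. x \<in> mcar M \<longrightarrow> msc M (r + s) x = madd M (msc M r x) (msc M s x)) \<and>
     (\<forall>r s x. x \<in> mcar M \<longrightarrow> msc M (r * s) x = msc M r (msc M s x)) \<and>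
     (\<forall>x\<in>mcar M. msc M 1 x = x)"

definition rlinear :: "('r::ring_1, 'a) rmod \<Rightarrow> ('r, 'b) rmod \<Rightarrow> ('a \<Rightarrow> 'b) \<Rightarrow> bool" where
  "rlinear A B f \<longleftrightarrow>
     (\<forall>x\<in>mcar A. f x \<in> mcar B) \<and>
     (\<forall>x\<in>mcar A. \<forall>y\<in>mcar A. f (madd A x y) = madd B (f x) (f y)) \<and>
     (\<forall>r. \<forall>x\<in>mcar A. f (msc A r x) = msc B r (f x))"

text \<open>An R\<otimes>Q-module, viewed as an R-module: an R-module whose underlying abelian
  group is uniquely divisible (multiplication by each positive integer is bijective).\<close>
definition rQ_module :: "('r::ring_1, 'e) rmod \<Rightarrow> bool" where
  "rQ_module M \<longleftrightarrow> is_rmodule M \<and>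
     (\<forall>n::nat. n > 0 \<longrightarrow> bij_betw (msc M (of_nat n)) (mcar M) (mcar M))"

definition smooth_module ::
  "('g, 'z) monoid_scheme \<Rightarrow> 'g topology \<Rightarrow> ('r::ring_1, 'e) rmod \<Rightarrow> ('g \<Rightarrow> 'e \<Rightarrow> 'e) \<Rightarrow> bool" where
  "smooth_module G T E act \<longleftrightarrow>
     is_rmodule E \<and>
     (\<forall>g\<in>carrier G. \<forall>x\<in>mcar E. act g x \<in> mcar E) \<and>
     (\<forall>x\<in>mcar E. act \<one>\<^bsub>G\<^esub> x = x) \<and>
     (\<forall>g\<in>carrier G. \<forall>h\<in>carrier G. \<forall>x\<in>mcar E. act (g \<otimes>\<^bsub>G\<^esub> h) x = act g (act h x)) \<and>
     (\<forall>g\<in>carrier G. rlinear E E (act g)) \<and>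
     (\<forall>x\<in>mcar E. openin T {g \<in> carrier G. act g x = x})"

definition smooth_hom ::
  "('g, 'z) monoid_scheme \<Rightarrow> ('r::ring_1, 'a) rmod \<Rightarrow> ('g \<Rightarrow> 'a \<Rightarrow> 'a)
     \<Rightarrow> ('r, 'b) rmod \<Rightarrow> ('g \<Rightarrow> 'b \<Rightarrow> 'b) \<Rightarrow> ('a \<Rightarrow> 'b) \<Rightarrow> bool" where
  "smooth_hom G A actA B actB f \<longleftrightarrow>
     rlinear A B f \<and> (\<forall>g\<in>carrier G. \<forall>x\<in>mcar A. f (actA g x) = actB g (f x))"

definition smooth_submodule ::
  "('g, 'z) monoid_scheme \<Rightarrow> ('r::ring_1, 'e) rmod \<Rightarrow> ('g \<Rightarrow> 'e \<Rightarrow> 'e) \<Rightarrow> 'e set \<Rightarrow> bool" where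
  "smooth_submodule G E act S \<longleftrightarrow>
     S \<subseteq> mcar E \<and> mzero E \<in> S \<and>
     (\<forall>x\<in>S. \<forall>y\<in>S. madd E x y \<in> S) \<and>
     (\<forall>r. \<forall>x\<in>S. msc E r x \<in> S) \<and>
     (\<forall>g\<in>carrier G. \<forall>x\<in>S. act g x \<in> S)"

definition essential_extension ::
  "('g, 'z) monoid_scheme \<Rightarrow> 'g topology \<Rightarrow> ('r::ring_1, 'm) rmod \<Rightarrow> ('g \<Rightarrow> 'm \<Rightarrow> 'm)
     \<Rightarrow> ('r, 'e) rmod \<Rightarrow> ('g \<Rightarrow> 'e \<Rightarrow> 'e) \<Rightarrow> ('m \<Rightarrow> 'e) \<Rightarrow> bool" where
  "essential_extension G T M actM E actE f \<longleftrightarrow>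
     smooth_module G T M actM \<and> smooth_module G T E actE \<and>
     smooth_hom G M actM E actE f \<and> inj_on f (mcar M) \<and>
     (\<forall>S. smooth_submodule G E actE S \<and> S \<noteq> {mzero E} \<longrightarrow>
          (\<exists>x\<in>S. x \<noteq> mzero E \<and> x \<in> f ` mcar M))"

definition trivial_action :: "('g, 'z) monoid_scheme \<Rightarrow> ('r, 'e) rmod \<Rightarrow> ('g \<Rightarrow> 'e \<Rightarrow> 'e) \<Rightarrow> bool" where
  "trivial_action G E act \<longleftrightarrow> (\<forall>g\<in>carrier G. \<forall>x\<in>mcar E. act g x = x)"

text \<open>Injective R-module, relative to test modules whose carriers live in type 'x.\<close>
definition rmod_injective_in :: "'x itself \<Rightarrow> ('r::ring_1, 'm) rmod \<Rightarrow> bool" where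
  "rmod_injective_in (_ :: 'x itself) M \<longleftrightarrow>
     (\<forall>(X :: ('r, 'x) rmod) (Y :: ('r, 'x) rmod) i h.
        is_rmodule X \<and> is_rmodule Y \<and> rlinear X Y i \<and> inj_on i (mcar X) \<and> rlinear X M h \<longrightarrow>
        (\<exists>k. rlinear Y M k \<and> (\<forall>x\<in>mcar X. k (i x) = h x)))"

definition smooth_injective_in ::
  "'a itself \<Rightarrow> 'b itself \<Rightarrow> ('g, 'z) monoid_scheme \<Rightarrow> 'g topology
     \<Rightarrow> ('r::ring_1, 'm) rmod \<Rightarrow> ('g \<Rightarrow> 'm \<Rightarrow> 'm) \<Rightarrow> bool" where
  "smooth_injective_in (_ :: 'a itself) (_ :: 'b itself) G T M actM \<longleftrightarrow>
     smooth_module G T M actM \<and>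
     (\<forall>(A :: ('r, 'a) rmod) actA (B :: ('r, 'b) rmod) actB i h.
        smooth_module G T A actA \<and> smooth_module G T B actB \<and>
        smooth_hom G A actA B actB i \<and> inj_on i (mcar A) \<and>
        smooth_hom G A actA M actM h \<longrightarrow>
        (\<exists>k. smooth_hom G B actB M actM k \<and> (\<forall>x\<in>mcar A. k (i x) = h x)))"

end

theory Submission
  imports Defs "HOL-Algebra.FiniteProduct"
begin

text \<open>For \<open>V \<in> B\<close> let \<open>tr\<^sub>V\<close> be the trace \<open>y \<mapsto> \<Sum> n y\<close> over \<open>N\<^sub>G(V)/V\<close> on a smooth module \<open>X\<close>,
  and let \<open>I X\<close> be the submodule spanned by the differences \<open>g y - y\<close>. If \<open>U \<in> B\<close> fixes \<open>y\<close>,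
  then for all sufficiently small \<open>V \<in> B\<close> the coset \<open>gU\<close> is \<open>V\<close>-fixed, so by hypothesis
  \<open>g = n u\<close> with \<open>n \<in> N\<^sub>G(V)\<close>, \<open>u \<in> U\<close>, and \<open>tr\<^sub>V (g y - y) = tr\<^sub>V (n y) - tr\<^sub>V y = 0\<close>. Hence every
  \<open>d \<in> I X\<close> has \<open>tr\<^sub>V d = 0\<close> for small \<open>V\<close>.

  Now let \<open>i : A \<hookrightarrow> X\<close> be a monomorphism and \<open>h : A \<rightarrow> M\<close> a \<open>G\<close>-invariant linear map into a
  uniquely divisible \<open>M\<close>. If \<open>i a \<in> I X\<close>, then \<open>i (tr\<^sub>V a) = tr\<^sub>V (i a) = 0\<close>, so
  \<open>|N\<^sub>G(V)/V| \<cdot> h a = h (tr\<^sub>V a) = 0\<close> and \<open>h a = 0\<close>. For an essential extension \<open>M \<hookrightarrow> E\<close> this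
  forces \<open>I E = 0\<close>, i.e. \<open>G\<close> acts trivially on \<open>E\<close>. In general \<open>h\<close> extends to \<open>i(A) + I X\<close> by zero
  on \<open>I X\<close>, then by \<open>R\<close>-injectivity of \<open>M\<close> to all of \<open>X\<close>; the extension kills every \<open>g y - y\<close>
  and is therefore \<open>G\<close>-invariant.\<close>

definition add_group :: "('r, 'e) rmod \<Rightarrow> 'e monoid" where
  "add_group X = \<lparr>carrier = mcar X, monoid.mult = madd X, one = mzero X\<rparr>"

lemma add_group_simps [simp]:
  "carrier (add_group X) = mcar X" "monoid.mult (add_group X) = madd X" "one (add_group X) = mzero X"
  by (simp_all add: add_group_def)

definition rsubmodule :: "('r, 'e) rmod \<Rightarrow> 'e set \<Rightarrow> bool" where
  "rsubmodule X S \<longleftrightarrow> S \<subseteq> mcar X \<and> mzero X \<in> S \<and>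
     (\<forall>x\<in>S. \<forall>y\<in>S. madd X x y \<in> S) \<and> (\<forall>r. \<forall>x\<in>S. msc X r x \<in> S)"

lemma smooth_submodule_iff:
  "smooth_submodule G X act S \<longleftrightarrow> rsubmodule X S \<and> (\<forall>g\<in>carrier G. \<forall>x\<in>S. act g x \<in> S)"
  by (auto simp: smooth_submodule_def rsubmodule_def)

locale rmodule =
  fixes X :: "('r::ring_1, 'e) rmod"
  assumes is_rmodule: "is_rmodule X"
begin

lemma zero_closed: "mzero X \<in> mcar X"
  and add_closed: "x \<in> mcar X \<Longrightarrow> y \<in> mcar X \<Longrightarrow> madd X x y \<in> mcar X"
  and msc_closed: "x \<in> mcar X \<Longrightarrow> msc X r x \<in> mcar X"
  and add_commute: "x \<in> mcar X \<Longrightarrow> y \<in> mcar X \<Longrightarrow> madd X x y = madd X y x"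
  using is_rmodule by (simp_all add: is_rmodule_def)

lemma add_assoc: "x \<in> mcar X \<Longrightarrow> y \<in> mcar X \<Longrightarrow> z \<in> mcar X \<Longrightarrow>
    madd X (madd X x y) z = madd X x (madd X y z)"
  using is_rmodule unfolding is_rmodule_def by blast

lemma zero_add: "x \<in> mcar X \<Longrightarrow> madd X (mzero X) x = x"
  using is_rmodule unfolding is_rmodule_def by blast

lemma add_inverse: "x \<in> mcar X \<Longrightarrow> \<exists>y\<in>mcar X. madd X x y = mzero X"
  using is_rmodule unfolding is_rmodule_def by blast

lemma msc_add_right: "x \<in> mcar X \<Longrightarrow> y \<in> mcar X \<Longrightarrow> msc X r (madd X x y) = madd X (msc X r x) (msc X r y)"
  and msc_add_left: "x \<in> mcar X \<Longrightarrow> msc X (r + s) x = madd X (msc X r x) (msc X s x)"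
  and msc_mult: "x \<in> mcar X \<Longrightarrow> msc X (r * s) x = msc X r (msc X s x)"
  and msc_one: "x \<in> mcar X \<Longrightarrow> msc X 1 x = x"
  using is_rmodule by (auto simp: is_rmodule_def)

sublocale add: comm_group "add_group X"
proof (rule comm_groupI)
  show "\<exists>y\<in>carrier (add_group X). y \<otimes>\<^bsub>add_group X\<^esub> x = \<one>\<^bsub>add_group X\<^esub>"
    if "x \<in> carrier (add_group X)" for x
    using that add_inverse[of x] add_commute by auto
qed (auto simp: zero_closed add_closed add_assoc zero_add intro: add_commute)

lemma add_zero [simp]: "x \<in> mcar X \<Longrightarrow> madd X x (mzero X) = x"
  and add_neg_right [simp]: "x \<in> mcar X \<Longrightarrow> madd X x (inv\<^bsub>add_group X\<^esub> x) = mzero X"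
  and add_neg_left [simp]: "x \<in> mcar X \<Longrightarrow> madd X (inv\<^bsub>add_group X\<^esub> x) x = mzero X"
  and neg_closed [simp]: "x \<in> mcar X \<Longrightarrow> inv\<^bsub>add_group X\<^esub> x \<in> mcar X"
  using add.r_one add.r_inv add.l_inv add.inv_closed by simp_all

lemma neg_add_cancel_left [simp]:
  "x \<in> mcar X \<Longrightarrow> w \<in> mcar X \<Longrightarrow> madd X (inv\<^bsub>add_group X\<^esub> x) (madd X x w) = w"
  using add_assoc[symmetric, of "inv\<^bsub>add_group X\<^esub> x" x w] zero_add by simp

lemma add_add_add_commute:
  assumes "a \<in> mcar X" "b \<in> mcar X" "c \<in> mcar X" "d \<in> mcar X"
  shows "madd X (madd X a b) (madd X c d) = madd X (madd X a c) (madd X b d)"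
proof -
  have "madd X b (madd X c d) = madd X c (madd X b d)"
    using assms add_assoc[of b c d] add_assoc[of c b d] add_commute[of b c] by simp
  then show ?thesis
    using assms add_assoc[of a b "madd X c d"] add_assoc[of a c "madd X b d"] by (simp add: add_closed)
qed

lemma msc_zero_left: "x \<in> mcar X \<Longrightarrow> msc X 0 x = mzero X"
  using msc_add_left[of x 0 0] add.l_cancel_one'[of "msc X 0 x" "msc X 0 x"] msc_closed by simp

lemma add_msc_minus_one: "x \<in> mcar X \<Longrightarrow> madd X x (msc X (-1) x) = mzero X"
  using msc_add_left[of x 1 "-1"] msc_one msc_zero_left by simp

lemma msc_minus_one:
  assumes "x \<in> mcar X" shows "msc X (-1) x = inv\<^bsub>add_group X\<^esub> x"
proof -
  have "madd X (msc X (-1) x) x = mzero X"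
    using add_msc_minus_one add_commute msc_closed assms by metis
  then show ?thesis using add.inv_equality msc_closed assms by simp
qed

lemma pow_eq_msc_of_nat: "x \<in> mcar X \<Longrightarrow> x [^]\<^bsub>add_group X\<^esub> (k::nat) = msc X (of_nat k) x"
proof (induction k)
  case 0
  then show ?case using msc_zero_left by simp
next
  case (Suc k)
  then have "x [^]\<^bsub>add_group X\<^esub> Suc k = madd X (msc X 1 x) (msc X (of_nat k) x)"
    using msc_one msc_closed add.m_comm by simp
  also have "\<dots> = msc X (of_nat (Suc k)) x"
    using msc_add_left[of x 1] Suc.prems by simp
  finally show ?case .
qed

lemma rsubmodule_is_rmodule:
  assumes "rsubmodule X S" shows "is_rmodule (X\<lparr>mcar := S\<rparr>)"
proof -
  have sub: "x \<in> mcar X" if "x \<in> S" for x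
    using that assms by (auto simp: rsubmodule_def)
  have "\<exists>y\<in>S. madd X x y = mzero X" if "x \<in> S" for x
    using that assms sub[OF that] add_msc_minus_one[of x]
    by (intro bexI[of _ "msc X (-1) x"]) (auto simp: rsubmodule_def)
  then show ?thesis
    using assms unfolding is_rmodule_def rsubmodule_def
    by (auto simp: sub add_assoc zero_add msc_add_right msc_add_left msc_mult msc_one intro: add_commute)
qed


lemma rsubmodule_inv_closed:
  assumes "rsubmodule X S" "x \<in> S" shows "inv\<^bsub>add_group X\<^esub> x \<in> S"
proof -
  have "x \<in> mcar X" "msc X (-1) x \<in> S" using assms by (auto simp: rsubmodule_def)
  then show ?thesis using msc_minus_one by simp
qed

end

lemma group_hom_add_groupI:
  assumes "rmodule X" "rmodule Y" "\<And>x. x \<in> mcar X \<Longrightarrow> f x \<in> mcar Y"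
    "\<And>x y. x \<in> mcar X \<Longrightarrow> y \<in> mcar X \<Longrightarrow> f (madd X x y) = madd Y (f x) (f y)"
  shows "group_hom (add_group X) (add_group Y) f"
proof -
  interpret X: rmodule X by fact
  interpret Y: rmodule Y by fact
  show ?thesis
    by (intro group_hom.intro group_hom_axioms.intro X.add.group_axioms Y.add.group_axioms)
      (auto simp: hom_def assms)
qed

lemma rlinear_group_hom:
  "rmodule X \<Longrightarrow> rmodule Y \<Longrightarrow> rlinear X Y f \<Longrightarrow> group_hom (add_group X) (add_group Y) f"
  by (rule group_hom_add_groupI) (auto simp: rlinear_def)

lemma rlinear_zero: "rmodule X \<Longrightarrow> rmodule Y \<Longrightarrow> rlinear X Y f \<Longrightarrow> f (mzero X) = mzero Y"
  using group_hom.hom_one[OF rlinear_group_hom] by simp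

lemma (in rmodule) msc_group_hom: "group_hom (add_group X) (add_group X) (msc X r)"
  using rmodule_axioms rmodule_axioms by (rule group_hom_add_groupI) (auto simp: msc_closed msc_add_right)

lemma group_hom_finprod:
  assumes "group_hom G H f" "comm_group G" "comm_group H" "g \<in> A \<rightarrow> carrier G"
  shows "f (finprod G g A) = finprod H (\<lambda>x. f (g x)) A"
proof -
  interpret G: comm_group G by fact
  interpret H: comm_group H by fact
  interpret f: group_hom G H f by fact
  show ?thesis
    using assms(4) by (induction A rule: infinite_finite_induct) (auto simp: Pi_def)
qed

lemma (in comm_group) div_eq_div_of_mult_eq:
  assumes "x \<in> carrier G" "x' \<in> carrier G" "d \<in> carrier G" "d' \<in> carrier G" "x \<otimes> d = x' \<otimes> d'"
  shows "x \<otimes> inv x' = d' \<otimes> inv d"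
  by (smt (verit, ccfv_threshold) assms inv_closed inv_solve_right m_assoc m_closed m_comm)

lemma (in group) normalizer_conj_mem:
  assumes "subgroup V G" "n \<in> normalizer G V" "v \<in> V"
  shows "inv n \<otimes> v \<otimes> n \<in> V"
proof -
  have V: "V \<subseteq> carrier G" and n: "n \<in> carrier G" and "(n <# V) #> inv n = V"
    using assms(1,2) subgroup.subset[OF assms(1)] by (auto simp: normalizer_def stabilizer_def)
  with assms(3) obtain v' where v': "v' \<in> V" "v = n \<otimes> v' \<otimes> inv n"
    unfolding r_coset_def l_coset_def by auto
  then have "inv n \<otimes> v \<otimes> n = v'"
    using V n by (simp add: m_assoc[symmetric] subsetD) (simp add: m_assoc subsetD)
  with v' show ?thesis by simp
qed

section \<open>Linear actions and the normalizer trace\<close>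

locale linear_action = group G + rmodule X
  for G :: "('g, 'z) monoid_scheme" (structure) and X :: "('r::ring_1, 'e) rmod" +
  fixes act :: "'g \<Rightarrow> 'e \<Rightarrow> 'e"
  assumes act_closed: "g \<in> carrier G \<Longrightarrow> x \<in> mcar X \<Longrightarrow> act g x \<in> mcar X"
    and act_one: "x \<in> mcar X \<Longrightarrow> act \<one> x = x"
    and act_mult: "g \<in> carrier G \<Longrightarrow> h \<in> carrier G \<Longrightarrow> x \<in> mcar X \<Longrightarrow> act (g \<otimes> h) x = act g (act h x)"
    and act_rlinear: "g \<in> carrier G \<Longrightarrow> rlinear X X (act g)"

lemma smooth_module_linear_action:
  "group G \<Longrightarrow> smooth_module G T X act \<Longrightarrow> linear_action G X act"
  by (auto simp: smooth_module_def linear_action_def linear_action_axioms_def rmodule_def)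

lemma (in rmodule) linear_action_trivial: "group G \<Longrightarrow> linear_action G X (\<lambda>g x. x)"
  using is_rmodule
  by (auto simp: linear_action_def linear_action_axioms_def rmodule_def rlinear_def is_rmodule_def)

definition fixed_points :: "('r, 'e) rmod \<Rightarrow> ('g \<Rightarrow> 'e \<Rightarrow> 'e) \<Rightarrow> 'g set \<Rightarrow> 'e set" where
  "fixed_points X act V = {x \<in> mcar X. \<forall>v\<in>V. act v x = x}"

definition coset_rep :: "('g, 'z) monoid_scheme \<Rightarrow> 'g set \<Rightarrow> 'g set \<Rightarrow> 'g" where
  "coset_rep G V C = (SOME n. n \<in> normalizer G V \<and> C = V #>\<^bsub>G\<^esub> n)"

text \<open>Representatives are chosen by \<open>SOME\<close>; on \<open>V\<close>-fixed vectors the trace does not depend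
  on the choice (\<open>act_rcos_eq\<close>).\<close>
definition normalizer_trace ::
  "('g, 'z) monoid_scheme \<Rightarrow> ('r, 'e) rmod \<Rightarrow> ('g \<Rightarrow> 'e \<Rightarrow> 'e) \<Rightarrow> 'g set \<Rightarrow> 'e \<Rightarrow> 'e" where
  "normalizer_trace G X act V y =
     finprod (add_group X) (\<lambda>C. act (coset_rep G V C) y) (normalizer_quotient G V)"

lemma normalizer_closed: "n \<in> normalizer G V \<Longrightarrow> n \<in> carrier G"
  by (simp add: normalizer_def stabilizer_def)

lemma coset_rep:
  assumes "C \<in> normalizer_quotient G V"
  shows "coset_rep G V C \<in> normalizer G V" "C = V #>\<^bsub>G\<^esub> coset_rep G V C"
proof -
  have "\<exists>n. n \<in> normalizer G V \<and> C = V #>\<^bsub>G\<^esub> n"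
    using assms by (auto simp: normalizer_quotient_def)
  then have "coset_rep G V C \<in> normalizer G V \<and> C = V #>\<^bsub>G\<^esub> coset_rep G V C"
    unfolding coset_rep_def by (rule someI_ex)
  then show "coset_rep G V C \<in> normalizer G V" "C = V #>\<^bsub>G\<^esub> coset_rep G V C" by auto
qed

lemma coset_rep_closed:
  assumes "C \<in> normalizer_quotient G V" shows "coset_rep G V C \<in> carrier G"
  using coset_rep(1)[OF assms] by (rule normalizer_closed)

lemma (in group) normalizer_quotient_rcos_bij:
  assumes V: "subgroup V G" and n: "n \<in> normalizer G V"
  shows "bij_betw (\<lambda>C. C #> n) (normalizer_quotient G V) (normalizer_quotient G V)"
proof -
  interpret N: subgroup "normalizer G V" G
    using normalizer_imp_subgroup subgroup.subset[OF V] by blast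
  have Vc: "V \<subseteq> carrier G" using subgroup.subset[OF V] .
  have maps: "C #> g \<in> normalizer_quotient G V"
    if "C \<in> normalizer_quotient G V" "g \<in> normalizer G V" for C g
    using that Vc by (auto simp: normalizer_quotient_def coset_mult_assoc)
  have cancel: "(C #> g) #> inv g = C"
    if "C \<in> normalizer_quotient G V" "g \<in> normalizer G V" for C g
    using that Vc by (auto simp: normalizer_quotient_def coset_mult_assoc m_assoc)
  have inv_n: "inv n \<in> normalizer G V" and inv_inv_n: "inv (inv n) = n"
    using n by simp_all
  show ?thesis
  proof (rule bij_betw_byWitness[where f' = "\<lambda>C. C #> inv n"])
    show "\<forall>C\<in>normalizer_quotient G V. (C #> n) #> inv n = C"
      using cancel n by blast
    show "\<forall>C\<in>normalizer_quotient G V. (C #> inv n) #> n = C"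
      using cancel[OF _ inv_n] inv_inv_n by simp
    show "(\<lambda>C. C #> n) ` normalizer_quotient G V \<subseteq> normalizer_quotient G V"
      and "(\<lambda>C. C #> inv n) ` normalizer_quotient G V \<subseteq> normalizer_quotient G V"
      using maps n inv_n by blast+
  qed
qed

context linear_action
begin

lemma act_group_hom: "g \<in> carrier G \<Longrightarrow> group_hom (add_group X) (add_group X) (act g)"
  using rmodule_axioms rmodule_axioms act_rlinear by (rule rlinear_group_hom)

lemma act_zero [simp]: "g \<in> carrier G \<Longrightarrow> act g (mzero X) = mzero X"
  using group_hom.hom_one[OF act_group_hom] by simp

lemma act_add: "g \<in> carrier G \<Longrightarrow> x \<in> mcar X \<Longrightarrow> y \<in> mcar X \<Longrightarrow>
    act g (madd X x y) = madd X (act g x) (act g y)"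
  using group_hom.hom_mult[OF act_group_hom] by fastforce

lemma act_inv: "g \<in> carrier G \<Longrightarrow> x \<in> mcar X \<Longrightarrow>
    act g (inv\<^bsub>add_group X\<^esub> x) = inv\<^bsub>add_group X\<^esub> (act g x)"
  using group_hom.hom_inv[OF act_group_hom] by fastforce

lemma act_msc: "g \<in> carrier G \<Longrightarrow> x \<in> mcar X \<Longrightarrow> act g (msc X r x) = msc X r (act g x)"
  using act_rlinear by (simp add: rlinear_def)

lemma act_rcos_eq:
  assumes V: "subgroup V G" and n: "n \<in> normalizer G V" and m: "m \<in> V #> n"
    and y: "y \<in> fixed_points X act V"
  shows "act m y = act n y"
proof -
  have nc: "n \<in> carrier G" using n by (rule normalizer_closed)
  obtain v where v: "v \<in> V" "m = v \<otimes> n" using m by (auto simp: r_coset_def)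
  have vc: "v \<in> carrier G" using v subgroup.subset[OF V] by blast
  have conj: "inv n \<otimes> v \<otimes> n \<in> V" by (rule normalizer_conj_mem[OF V n v(1)])
  have "m = n \<otimes> (inv n \<otimes> v \<otimes> n)" using v nc vc by (simp add: m_assoc[symmetric])
  then have "act m y = act n (act (inv n \<otimes> v \<otimes> n) y)"
    using act_mult nc vc y by (simp add: fixed_points_def)
  also have "\<dots> = act n y" using conj y by (simp add: fixed_points_def)
  finally show ?thesis .
qed

lemma trace_summands_closed:
  "y \<in> mcar X \<Longrightarrow> (\<lambda>C. act (coset_rep G V C) y) \<in> normalizer_quotient G V \<rightarrow> carrier (add_group X)"
  by (auto intro!: act_closed coset_rep_closed)

lemma trace_closed: "y \<in> mcar X \<Longrightarrow> normalizer_trace G X act V y \<in> mcar X"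
  unfolding normalizer_trace_def using add.finprod_closed[OF trace_summands_closed] by simp

lemma trace_group_hom: "group_hom (add_group X) (add_group X) (normalizer_trace G X act V)"
  using rmodule_axioms rmodule_axioms trace_closed
proof (rule group_hom_add_groupI)
  show "normalizer_trace G X act V (madd X x y) =
      madd X (normalizer_trace G X act V x) (normalizer_trace G X act V y)"
    if "x \<in> mcar X" "y \<in> mcar X" for x y
  proof -
    have "normalizer_trace G X act V (madd X x y) = finprod (add_group X)
        (\<lambda>C. act (coset_rep G V C) x \<otimes>\<^bsub>add_group X\<^esub> act (coset_rep G V C) y) (normalizer_quotient G V)"
      unfolding normalizer_trace_def using that
      by (intro add.finprod_cong') (auto simp: act_add coset_rep_closed intro!: add_closed act_closed)
    also have "\<dots> = madd X (normalizer_trace G X act V x) (normalizer_trace G X act V y)"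
      unfolding normalizer_trace_def
      using add.finprod_multf[OF trace_summands_closed trace_summands_closed] that by simp
    finally show ?thesis .
  qed
qed

lemma trace_normalizer_invariant:
  assumes V: "subgroup V G" and n: "n \<in> normalizer G V" and y: "y \<in> fixed_points X act V"
  shows "normalizer_trace G X act V (act n y) = normalizer_trace G X act V y"
proof -
  let ?Q = "normalizer_quotient G V" and ?r = "coset_rep G V"
  have yX: "y \<in> mcar X" using y by (simp add: fixed_points_def)
  have nc: "n \<in> carrier G" using n by (rule normalizer_closed)
  have bij: "bij_betw (\<lambda>C. C #> n) ?Q ?Q" by (rule normalizer_quotient_rcos_bij[OF V n])
  have shift_mem: "C #> n \<in> ?Q" if "C \<in> ?Q" for C
    using bij that by (auto simp: bij_betw_def)
  have shift: "act (?r C) (act n y) = act (?r (C #> n)) y" if C: "C \<in> ?Q" for C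
  proof -
    have rc: "?r C \<in> carrier G" using coset_rep_closed[OF C] .
    have r': "?r (C #> n) \<in> normalizer G V" "C #> n = V #> ?r (C #> n)"
      using coset_rep shift_mem[OF C] by blast+
    have "?r C \<otimes> n \<in> V #> (?r C \<otimes> n)" using rcos_self[OF _ V] rc nc by simp
    also have "\<dots> = C #> n"
      using coset_rep(2)[OF C] coset_mult_assoc[OF subgroup.subset[OF V] rc nc] by simp
    finally have "act (?r C \<otimes> n) y = act (?r (C #> n)) y"
      using act_rcos_eq[OF V r'(1) _ y] r'(2) by simp
    then show ?thesis using act_mult[OF rc nc yX] by simp
  qed
  have "normalizer_trace G X act V (act n y) = finprod (add_group X) (\<lambda>C. act (?r (C #> n)) y) ?Q"
    unfolding normalizer_trace_def
    using shift shift_mem yX by (intro add.finprod_cong') (auto intro!: act_closed coset_rep_closed)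
  also have "\<dots> = finprod (add_group X) (\<lambda>C. act (?r C) y) ((\<lambda>C. C #> n) ` ?Q)"
    using bij trace_summands_closed[OF yX]
    by (intro add.finprod_reindex[symmetric]) (auto simp: bij_betw_def)
  also have "\<dots> = normalizer_trace G X act V y"
    using bij by (simp add: bij_betw_def normalizer_trace_def)
  finally show ?thesis .
qed

end

lemma smooth_hom_trace_commute:
  assumes X: "linear_action G X actX" and Y: "linear_action G Y actY"
    and f: "smooth_hom G X actX Y actY f" and y: "y \<in> mcar X"
  shows "f (normalizer_trace G X actX V y) = normalizer_trace G Y actY V (f y)"
proof -
  interpret X: linear_action G X actX by (rule X)
  interpret Y: linear_action G Y actY by (rule Y)
  have lin: "rlinear X Y f" and eqv: "\<And>g x. g \<in> carrier G \<Longrightarrow> x \<in> mcar X \<Longrightarrow> f (actX g x) = actY g (f x)"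
    using f by (auto simp: smooth_hom_def)
  have fy: "f y \<in> mcar Y" using lin y by (simp add: rlinear_def)
  have "f (normalizer_trace G X actX V y) =
      finprod (add_group Y) (\<lambda>C. f (actX (coset_rep G V C) y)) (normalizer_quotient G V)"
    unfolding normalizer_trace_def
    using rlinear_group_hom[OF X.rmodule_axioms Y.rmodule_axioms lin] X.add.comm_group_axioms
      Y.add.comm_group_axioms X.trace_summands_closed[OF y]
    by (rule group_hom_finprod)
  also have "\<dots> = normalizer_trace G Y actY V (f y)"
    unfolding normalizer_trace_def using Y.trace_summands_closed[OF fy] y
    by (intro Y.add.finprod_cong') (auto simp: eqv coset_rep_closed)
  finally show ?thesis .
qed

lemma (in rmodule) trace_trivial_action:
  assumes "y \<in> mcar X"
  shows "normalizer_trace G X (\<lambda>g x. x) V y = msc X (of_nat (card (normalizer_quotient G V))) y"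
  using assms by (simp add: normalizer_trace_def add.finprod_const pow_eq_msc_of_nat)

section \<open>The augmentation submodule\<close>

inductive_set aug_submodule :: "('g, 'z) monoid_scheme \<Rightarrow> ('r, 'e) rmod \<Rightarrow> ('g \<Rightarrow> 'e \<Rightarrow> 'e) \<Rightarrow> 'e set"
  for G X act
where
  zero: "mzero X \<in> aug_submodule G X act"
| diff_add: "g \<in> carrier G \<Longrightarrow> y \<in> mcar X \<Longrightarrow> d \<in> aug_submodule G X act \<Longrightarrow>
    madd X (madd X (act g y) (inv\<^bsub>add_group X\<^esub> y)) d \<in> aug_submodule G X act"

context linear_action
begin

lemma diff_closed: "g \<in> carrier G \<Longrightarrow> y \<in> mcar X \<Longrightarrow> madd X (act g y) (inv\<^bsub>add_group X\<^esub> y) \<in> mcar X"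
  using act_closed add.m_closed add.inv_closed by simp

lemma aug_subset: "d \<in> aug_submodule G X act \<Longrightarrow> d \<in> mcar X"
  by (induction rule: aug_submodule.induct) (auto intro: zero_closed add_closed diff_closed)

lemma aug_add:
  "d \<in> aug_submodule G X act \<Longrightarrow> e \<in> aug_submodule G X act \<Longrightarrow> madd X d e \<in> aug_submodule G X act"
proof (induction rule: aug_submodule.induct)
  case zero
  then show ?case using aug_subset zero_add by simp
next
  case (diff_add g y d)
  have "madd X (madd X (madd X (act g y) (inv\<^bsub>add_group X\<^esub> y)) d) e =
      madd X (madd X (act g y) (inv\<^bsub>add_group X\<^esub> y)) (madd X d e)"
    using diff_add.hyps diff_add.prems by (intro add_assoc diff_closed) (auto intro: aug_subset)
  then show ?case
    using aug_submodule.diff_add[OF diff_add.hyps(1,2) diff_add.IH[OF diff_add.prems]] by simp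
qed

lemma aug_diff:
  assumes "g \<in> carrier G" "y \<in> mcar X"
  shows "madd X (act g y) (inv\<^bsub>add_group X\<^esub> y) \<in> aug_submodule G X act"
  using aug_submodule.diff_add[where act = act, OF assms aug_submodule.zero] diff_closed[OF assms]
  by simp

lemma aug_msc: "d \<in> aug_submodule G X act \<Longrightarrow> msc X r d \<in> aug_submodule G X act"
proof (induction rule: aug_submodule.induct)
  case zero
  then show ?case using group_hom.hom_one[OF msc_group_hom] aug_submodule.zero by simp
next
  case (diff_add g y d)
  have "msc X r (madd X (madd X (act g y) (inv\<^bsub>add_group X\<^esub> y)) d)
      = madd X (madd X (act g (msc X r y)) (inv\<^bsub>add_group X\<^esub> (msc X r y))) (msc X r d)"
    using diff_add group_hom.hom_inv[OF msc_group_hom]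
    by (simp add: msc_add_right diff_closed aug_subset act_closed act_msc)
  then show ?case
    using aug_submodule.diff_add[OF diff_add.hyps(1) msc_closed[OF diff_add.hyps(2)] diff_add.IH] by simp
qed

lemma aug_act: "d \<in> aug_submodule G X act \<Longrightarrow> h \<in> carrier G \<Longrightarrow> act h d \<in> aug_submodule G X act"
proof (induction rule: aug_submodule.induct)
  case zero
  then show ?case using aug_submodule.zero by simp
next
  case (diff_add g y d)
  let ?z = "act h y" and ?hgy = "act (h \<otimes> g) y"
  have z: "?z \<in> mcar X" and hgy: "?hgy \<in> mcar X" and y: "act (inv h) ?z = y"
    using diff_add act_closed act_mult[of "inv h" h y] act_one by auto
  have "act h (madd X (act g y) (inv\<^bsub>add_group X\<^esub> y)) = madd X ?hgy (inv\<^bsub>add_group X\<^esub> ?z)"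
    using diff_add act_closed by (simp add: act_add act_inv act_mult)
  \<comment> \<open>\<open>h(gy - y) = (hg y - y) + (h\<^sup>-\<^sup>1 z - z)\<close> with \<open>z = h y\<close>\<close>
  also have "\<dots> = madd X (madd X ?hgy (inv\<^bsub>add_group X\<^esub> y))
      (madd X (act (inv h) ?z) (inv\<^bsub>add_group X\<^esub> ?z))"
    using add_assoc[of ?hgy "inv\<^bsub>add_group X\<^esub> y" "madd X y (inv\<^bsub>add_group X\<^esub> ?z)"] diff_add z hgy y
    by (simp add: add_closed)
  finally have "act h (madd X (act g y) (inv\<^bsub>add_group X\<^esub> y)) \<in> aug_submodule G X act"
    using diff_add z aug_add aug_diff by simp
  then show ?case
    using diff_add aug_add act_add[OF _ diff_closed aug_subset] by simp
qed

lemma aug_rsubmodule: "rsubmodule X (aug_submodule G X act)"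
  unfolding rsubmodule_def using aug_subset aug_submodule.zero aug_add aug_msc by blast

lemma aug_smooth_submodule: "smooth_submodule G X act (aug_submodule G X act)"
  unfolding smooth_submodule_iff using aug_rsubmodule aug_act by blast

end

section \<open>Extending linear maps into injective modules\<close>

text \<open>Transport of a module along the injection \<open>Pair c\<close>: \<open>rmod_injective_in\<close> only tests
  against modules whose carrier type is a product.\<close>
definition pair_rmod :: "'c \<Rightarrow> ('r, 'b) rmod \<Rightarrow> ('r, 'c \<times> 'b) rmod" where
  "pair_rmod c Y = \<lparr>mcar = Pair c ` mcar Y, madd = (\<lambda>p q. (c, madd Y (snd p) (snd q))),
     mzero = (c, mzero Y), msc = (\<lambda>r p. (c, msc Y r (snd p)))\<rparr>"

lemma rmodule_pair_rmod: "rmodule Y \<Longrightarrow> rmodule (pair_rmod c Y)"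
  unfolding rmodule_def is_rmodule_def pair_rmod_def by (auto simp: image_iff)

lemma injective_extends_from_submodule:
  fixes M :: "('r::ring_1, 'm) rmod" and Y :: "('r, 'b) rmod"
  assumes inj: "rmod_injective_in TYPE('c \<times> 'b) M" and Y: "rmodule Y" and S: "rsubmodule Y S"
    and f: "rlinear (Y\<lparr>mcar := S\<rparr>) M f"
  shows "\<exists>k. rlinear Y M k \<and> (\<forall>x\<in>S. k x = f x)"
proof -
  define P where "P = pair_rmod (undefined :: 'c) Y"
  define PS where "PS = P\<lparr>mcar := Pair undefined ` S\<rparr>"
  have P: "rmodule P" unfolding P_def by (rule rmodule_pair_rmod[OF Y])
  have "rsubmodule P (Pair undefined ` S)"
    using S by (auto simp: rsubmodule_def P_def pair_rmod_def)
  then have PS: "is_rmodule PS" unfolding PS_def by (rule rmodule.rsubmodule_is_rmodule[OF P])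
  have incl: "rlinear PS P (\<lambda>p. p)"
    using S by (auto simp: rlinear_def rsubmodule_def PS_def P_def pair_rmod_def)
  have "rlinear PS M (\<lambda>p. f (snd p))"
    using f by (auto simp: rlinear_def PS_def P_def pair_rmod_def)
  then have "\<exists>k'. rlinear P M k' \<and> (\<forall>p\<in>mcar PS. k' p = f (snd p))"
    using inj[unfolded rmod_injective_in_def, rule_format, of PS P "\<lambda>p. p" "\<lambda>p. f (snd p)"] PS P incl
    by (simp add: rmodule_def)
  then obtain k' where k': "rlinear P M k'" "\<forall>p\<in>mcar PS. k' p = f (snd p)"
    by blast
  show ?thesis
  proof (intro exI conjI)
    show "rlinear Y M (\<lambda>y. k' (undefined, y))"
      using k'(1) by (auto simp: rlinear_def P_def pair_rmod_def)
    show "\<forall>x\<in>S. k' (undefined, x) = f x"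
      using k'(2) by (simp add: PS_def P_def pair_rmod_def)
  qed
qed

context
  fixes A :: "('r::ring_1, 'a) rmod" and Y :: "('r, 'b) rmod" and M :: "('r, 'm) rmod"
    and i :: "'a \<Rightarrow> 'b" and h :: "'a \<Rightarrow> 'm" and D :: "'b set"
  assumes A: "rmodule A" and Y: "rmodule Y" and M: "rmodule M"
    and i: "rlinear A Y i" and h: "rlinear A M h" and D: "rsubmodule Y D"
    and vanish: "\<And>a. a \<in> mcar A \<Longrightarrow> i a \<in> D \<Longrightarrow> h a = mzero M"
begin

interpretation A: rmodule A by (rule A)
interpretation Y: rmodule Y by (rule Y)
interpretation M: rmodule M by (rule M)
interpretation i: group_hom "add_group A" "add_group Y" i by (rule rlinear_group_hom[OF A Y i])
interpretation h: group_hom "add_group A" "add_group M" h by (rule rlinear_group_hom[OF A M h])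

private lemma D_closed: "d \<in> D \<Longrightarrow> d \<in> mcar Y"
  using D by (auto simp: rsubmodule_def)

private lemma i_closed: "a \<in> mcar A \<Longrightarrow> i a \<in> mcar Y"
  using i by (simp add: rlinear_def)

private lemma h_eq_if_sums_eq:
  assumes a: "a \<in> mcar A" "a' \<in> mcar A" and d: "d \<in> D" "d' \<in> D"
    and eq: "madd Y (i a) d = madd Y (i a') d'"
  shows "h a = h a'"
proof -
  let ?x = "madd A a (inv\<^bsub>add_group A\<^esub> a')"
  have x: "?x \<in> mcar A" using a by (simp add: A.add_closed)
  have "i ?x = madd Y (i a) (inv\<^bsub>add_group Y\<^esub> (i a'))"
    using a i.hom_mult[of a "inv\<^bsub>add_group A\<^esub> a'"] i.hom_inv[of a'] by simp
  also have "\<dots> = madd Y d' (inv\<^bsub>add_group Y\<^esub> d)"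
    using Y.add.div_eq_div_of_mult_eq[of "i a" "i a'" d d'] eq a d i_closed D_closed by simp
  finally have "i ?x \<in> D"
    using d D Y.rsubmodule_inv_closed by (auto simp: rsubmodule_def)
  then have "madd M (h a) (inv\<^bsub>add_group M\<^esub> (h a')) = mzero M"
    using vanish[OF x] a h.hom_mult[of a "inv\<^bsub>add_group A\<^esub> a'"] h.hom_inv[of a'] by simp
  then show ?thesis
    using M.add.inv_equality[of "h a" "inv\<^bsub>add_group M\<^esub> (h a')"] a h.hom_closed by simp
qed

private lemma sum_add:
  assumes "a \<in> mcar A" "d \<in> D" "a' \<in> mcar A" "d' \<in> D"
  shows "madd Y (madd Y (i a) d) (madd Y (i a') d') = madd Y (i (madd A a a')) (madd Y d d')"
  using assms i i_closed D_closed Y.add_add_add_commute[of "i a" d "i a'" d'] by (simp add: rlinear_def)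

private lemma sum_msc:
  assumes "a \<in> mcar A" "d \<in> D"
  shows "msc Y r (madd Y (i a) d) = madd Y (i (msc A r a)) (msc Y r d)"
  using assms i i_closed D_closed by (simp add: Y.msc_add_right rlinear_def)

private definition sum_set :: "'b set" where
  "sum_set = {madd Y (i a) d |a d. a \<in> mcar A \<and> d \<in> D}"

private lemma sum_rsubmodule: "rsubmodule Y sum_set"
proof -
  have mem: "madd Y (i a) d \<in> sum_set" if "a \<in> mcar A" "d \<in> D" for a d
    using that by (auto simp: sum_set_def)
  have D0: "mzero Y \<in> D" and D_add: "\<And>d d'. d \<in> D \<Longrightarrow> d' \<in> D \<Longrightarrow> madd Y d d' \<in> D"
    and D_msc: "\<And>r d. d \<in> D \<Longrightarrow> msc Y r d \<in> D"
    using D by (auto simp: rsubmodule_def)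
  have "sum_set \<subseteq> mcar Y"
    using i_closed D_closed by (auto simp: sum_set_def intro: Y.add_closed)
  moreover have "mzero Y \<in> sum_set"
    using mem[OF A.zero_closed D0] i.hom_one Y.zero_closed by simp
  moreover have "madd Y p q \<in> sum_set" if pq_mem: "p \<in> sum_set" "q \<in> sum_set" for p q
  proof -
    obtain a d a' d' where ad: "a \<in> mcar A" "d \<in> D" "a' \<in> mcar A" "d' \<in> D"
      and pq: "p = madd Y (i a) d" "q = madd Y (i a') d'"
      using pq_mem unfolding sum_set_def by blast
    show ?thesis using mem[OF A.add_closed D_add] ad sum_add unfolding pq by simp
  qed
  moreover have "msc Y r p \<in> sum_set" if p_mem: "p \<in> sum_set" for r p
  proof -
    obtain a d where ad: "a \<in> mcar A" "d \<in> D" and p: "p = madd Y (i a) d"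
      using p_mem unfolding sum_set_def by blast
    show ?thesis using mem[OF A.msc_closed D_msc] ad sum_msc unfolding p by simp
  qed
  ultimately show ?thesis by (simp add: rsubmodule_def)
qed

private definition h_sum :: "'b \<Rightarrow> 'm" where
  "h_sum w = h (SOME a. a \<in> mcar A \<and> (\<exists>d\<in>D. w = madd Y (i a) d))"

private lemma h_sum_eq: "a \<in> mcar A \<Longrightarrow> d \<in> D \<Longrightarrow> h_sum (madd Y (i a) d) = h a"
  unfolding h_sum_def by (rule someI2[of _ a]) (auto intro: h_eq_if_sums_eq)

private lemma h_sum_rlinear: "rlinear (Y\<lparr>mcar := sum_set\<rparr>) M h_sum"
  unfolding rlinear_def
proof (intro conjI ballI allI)
  fix p q assume "p \<in> mcar (Y\<lparr>mcar := sum_set\<rparr>)" "q \<in> mcar (Y\<lparr>mcar := sum_set\<rparr>)"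
  then obtain a d a' d' where "a \<in> mcar A" "d \<in> D" "a' \<in> mcar A" "d' \<in> D"
    and "p = madd Y (i a) d" "q = madd Y (i a') d'" by (auto simp: sum_set_def)
  then show "h_sum (madd (Y\<lparr>mcar := sum_set\<rparr>) p q) = madd M (h_sum p) (h_sum q)"
    using D h h_sum_eq sum_add A.add_closed by (simp add: rsubmodule_def rlinear_def)
next
  fix r p assume "p \<in> mcar (Y\<lparr>mcar := sum_set\<rparr>)"
  then obtain a d where "a \<in> mcar A" "d \<in> D" "p = madd Y (i a) d" by (auto simp: sum_set_def)
  then show "h_sum p \<in> mcar M" and "h_sum (msc (Y\<lparr>mcar := sum_set\<rparr>) r p) = msc M r (h_sum p)"
    using D h h_sum_eq sum_msc A.msc_closed by (simp_all add: rsubmodule_def rlinear_def)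
qed

lemma injective_extends_modulo_submodule:
  assumes inj: "rmod_injective_in TYPE('c \<times> 'b) M"
  shows "\<exists>k. rlinear Y M k \<and> (\<forall>a\<in>mcar A. k (i a) = h a) \<and> (\<forall>d\<in>D. k d = mzero M)"
proof -
  obtain k where k: "rlinear Y M k" "\<forall>x\<in>sum_set. k x = h_sum x"
    using injective_extends_from_submodule[OF inj Y sum_rsubmodule h_sum_rlinear] by blast
  have D0: "mzero Y \<in> D" using D by (simp add: rsubmodule_def)
  have "k (i a) = h a" if a: "a \<in> mcar A" for a
  proof -
    have "madd Y (i a) (mzero Y) \<in> sum_set" using a D0 by (auto simp: sum_set_def)
    then show ?thesis using k(2) h_sum_eq[OF a D0] i_closed[OF a] by simp
  qed
  moreover have "k d = mzero M" if d: "d \<in> D" for d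
  proof -
    have "madd Y (i (mzero A)) d \<in> sum_set" using d A.zero_closed by (auto simp: sum_set_def)
    then show ?thesis
      using k(2) h_sum_eq[OF A.zero_closed d] i.hom_one h.hom_one D_closed[OF d] Y.zero_add by simp
  qed
  ultimately show ?thesis using k(1) by blast
qed

end

section \<open>Small open subgroups\<close>

lemma (in group) lcos_fixed_of_conj_mem:
  assumes U: "subgroup U G" and g: "g \<in> carrier G" and v: "v \<in> carrier G"
    and conj: "inv g \<otimes> v \<otimes> g \<in> U"
  shows "v <# (g <# U) = g <# U"
proof -
  have Uc: "U \<subseteq> carrier G" using subgroup.subset[OF U] .
  have "v \<otimes> g = g \<otimes> (inv g \<otimes> v \<otimes> g)" using g v by (simp add: m_assoc[symmetric])
  then have "v <# (g <# U) = g <# ((inv g \<otimes> v \<otimes> g) <# U)"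
    using lcos_m_assoc[OF Uc v g] lcos_m_assoc[OF Uc g, of "inv g \<otimes> v \<otimes> g"] g v by simp
  also have "\<dots> = g <# U" using coset_join3[OF _ U conj] g v by simp
  finally show ?thesis .
qed

lemma (in group) lcos_eq_imp_factor:
  assumes U: "subgroup U G" and g: "g \<in> carrier G" and "g <# U = n <# U"
  shows "\<exists>u\<in>U. g = n \<otimes> u"
proof -
  have "g \<in> g <# U" using g subgroup.one_closed[OF U] unfolding l_coset_def by force
  with assms(3) show ?thesis unfolding l_coset_def by auto
qed

lemma topological_group_conj_continuous:
  assumes tg: "topological_group G T" and g: "g \<in> carrier G"
  shows "continuous_map T T (\<lambda>x. inv\<^bsub>G\<^esub> g \<otimes>\<^bsub>G\<^esub> x \<otimes>\<^bsub>G\<^esub> g)"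
proof -
  have grp: "group G" and top: "topspace T = carrier G"
    and mult: "continuous_map (prod_topology T T) T (\<lambda>p. fst p \<otimes>\<^bsub>G\<^esub> snd p)"
    using tg by (auto simp: topological_group_def)
  have "continuous_map T (prod_topology T T) (\<lambda>x. (inv\<^bsub>G\<^esub> g, x))"
    using g grp top by (intro continuous_map_pairedI) (auto simp: continuous_map_id[unfolded id_def])
  then have left: "continuous_map T T (\<lambda>x. inv\<^bsub>G\<^esub> g \<otimes>\<^bsub>G\<^esub> x)"
    using continuous_map_compose[OF _ mult] by (fastforce simp: o_def)
  have "continuous_map T (prod_topology T T) (\<lambda>x. (inv\<^bsub>G\<^esub> g \<otimes>\<^bsub>G\<^esub> x, g))"
    using left g top by (intro continuous_map_pairedI) auto
  then show ?thesis
    using continuous_map_compose[OF _ mult] by (fastforce simp: o_def)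
qed

lemma smooth_module_trivial_action:
  assumes "topological_group G T" "is_rmodule M"
  shows "smooth_module G T M (\<lambda>g x. x)"
proof -
  have "openin T (carrier G)"
    using assms(1) openin_topspace by (metis topological_group_def)
  then show ?thesis
    using assms(2) by (simp add: smooth_module_def rlinear_def rmodule.add_closed rmodule.msc_closed rmodule_def)
qed

lemma rQ_module_eq_zero:
  assumes M: "rQ_module M" and x: "x \<in> mcar M" and n: "n > 0"
    and eq: "msc M (of_nat n) x = mzero M"
  shows "x = mzero M"
proof -
  interpret M: rmodule M using M by (simp add: rQ_module_def rmodule_def)
  have "inj_on (msc M (of_nat n)) (mcar M)"
    using M n unfolding rQ_module_def by (blast intro: bij_betw_imp_inj_on)
  moreover have "msc M (of_nat n) (mzero M) = mzero M"
    using group_hom.hom_one[OF M.msc_group_hom] by simp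
  ultimately show ?thesis using eq x M.zero_closed by (metis inj_onD)
qed

locale admissible_subgroup_base =
  fixes G :: "('g, 'z) monoid_scheme" (structure) and T :: "'g topology" and B :: "'g set set"
  assumes topological_group: "topological_group G T"
    and base: "open_subgroup_base G T B"
    and normalizer_condition: "\<And>U V. U \<in> B \<Longrightarrow> V \<in> B \<Longrightarrow> V \<subseteq> U \<Longrightarrow>
      finite (normalizer_quotient G V) \<and> fixed_cosets G U V = normalizer_cosets G U V"
begin

sublocale group G
  using topological_group by (simp add: topological_group_def)

lemma topspace_eq: "topspace T = carrier G"
  using topological_group by (simp add: topological_group_def)

lemma base_subgroup: "U \<in> B \<Longrightarrow> subgroup U G"
  and base_open: "U \<in> B \<Longrightarrow> openin T U"
  and base_below: "openin T W \<Longrightarrow> \<one> \<in> W \<Longrightarrow> \<exists>U\<in>B. U \<subseteq> W"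
  using base by (auto simp: open_subgroup_base_def)

definition small_subgroups :: "'g set filter" where
  "small_subgroups = (INF W\<in>{W. openin T W \<and> \<one> \<in> W}. principal {V \<in> B. V \<subseteq> W})"

lemma eventually_small_subgroups:
  "eventually P small_subgroups \<longleftrightarrow> (\<exists>W. openin T W \<and> \<one> \<in> W \<and> (\<forall>V\<in>B. V \<subseteq> W \<longrightarrow> P V))"
  unfolding small_subgroups_def
proof (subst eventually_INF_base)
  show "{W. openin T W \<and> \<one> \<in> W} \<noteq> {}"
    using topspace_eq openin_topspace by blast
  show "\<exists>W\<in>{W. openin T W \<and> \<one> \<in> W}.
      principal {V \<in> B. V \<subseteq> W} \<le> inf (principal {V \<in> B. V \<subseteq> W1}) (principal {V \<in> B. V \<subseteq> W2})"
    if "W1 \<in> {W. openin T W \<and> \<one> \<in> W}" "W2 \<in> {W. openin T W \<and> \<one> \<in> W}" for W1 W2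
    using that by (intro bexI[of _ "W1 \<inter> W2"]) auto
qed (auto simp: eventually_principal)

lemma small_subgroups_neq_bot: "small_subgroups \<noteq> bot"
  unfolding trivial_limit_def eventually_small_subgroups using base_below by blast

lemma eventually_small_subgroups_subset:
  "openin T W \<Longrightarrow> \<one> \<in> W \<Longrightarrow> eventually (\<lambda>V. V \<subseteq> W) small_subgroups"
  unfolding eventually_small_subgroups by blast

lemma eventually_small_subgroups_base: "eventually (\<lambda>V. V \<in> B) small_subgroups"
  unfolding eventually_small_subgroups using topspace_eq openin_topspace by blast

lemma eventually_finite_normalizer_quotient:
  "eventually (\<lambda>V. finite (normalizer_quotient G V)) small_subgroups"
  using eventually_small_subgroups_base by (rule eventually_mono) (use normalizer_condition in blast)

lemma eventually_normalizer_factor: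
  assumes g: "g \<in> carrier G" and U: "U \<in> B"
  shows "eventually (\<lambda>V. V \<subseteq> U \<and> (\<exists>n\<in>normalizer G V. \<exists>u\<in>U. g = n \<otimes> u)) small_subgroups"
proof -
  define C where "C = {x \<in> topspace T. inv g \<otimes> x \<otimes> g \<in> U}"
  have "openin T C"
    unfolding C_def using base_open[OF U]
    by (rule openin_continuous_map_preimage[OF topological_group_conj_continuous[OF topological_group g]])
  moreover have "\<one> \<in> C" using g base_subgroup[OF U] topspace_eq by (simp add: C_def subgroup.one_closed)
  ultimately have "openin T (U \<inter> C)" "\<one> \<in> U \<inter> C"
    using base_open[OF U] base_subgroup[OF U] by (auto simp: subgroup.one_closed)
  then have "eventually (\<lambda>V. V \<in> B \<and> V \<subseteq> U \<inter> C) small_subgroups"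
    using eventually_small_subgroups_base eventually_small_subgroups_subset eventually_conj by blast
  then show ?thesis
  proof (rule eventually_mono)
    fix V assume V: "V \<in> B \<and> V \<subseteq> U \<inter> C"
    have "g <# U \<in> fixed_cosets G U V"
      using V g base_subgroup[OF U] lcos_fixed_of_conj_mem topspace_eq
      by (auto simp: fixed_cosets_def C_def)
    then obtain n where "n \<in> normalizer G V" "g <# U = n <# U"
      using normalizer_condition[OF U] V by (auto simp: normalizer_cosets_def)
    then show "V \<subseteq> U \<and> (\<exists>n\<in>normalizer G V. \<exists>u\<in>U. g = n \<otimes> u)"
      using V lcos_eq_imp_factor[OF base_subgroup[OF U] g] by blast
  qed
qed

lemma smooth_fixed_by_base:
  assumes "smooth_module G T X act" "x \<in> mcar X"
  shows "\<exists>U\<in>B. x \<in> fixed_points X act U"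
proof -
  have "openin T {g \<in> carrier G. act g x = x}" "\<one> \<in> {g \<in> carrier G. act g x = x}"
    using assms by (auto simp: smooth_module_def)
  then obtain U where "U \<in> B" "U \<subseteq> {g \<in> carrier G. act g x = x}"
    using base_below by blast
  then show ?thesis using assms(2) by (auto simp: fixed_points_def)
qed

lemma eventually_trace_diff_zero:
  assumes X: "smooth_module G T X act" and g: "g \<in> carrier G" and y: "y \<in> mcar X"
  shows "eventually (\<lambda>V. normalizer_trace G X act V (madd X (act g y) (inv\<^bsub>add_group X\<^esub> y)) = mzero X)
           small_subgroups"
proof -
  interpret X: linear_action G X act
    using smooth_module_linear_action[OF is_group X] .
  obtain U where U: "U \<in> B" "y \<in> fixed_points X act U"
    using smooth_fixed_by_base[OF X y] by blast
  have "eventually (\<lambda>V. V \<in> B \<and> V \<subseteq> U \<and> (\<exists>n\<in>normalizer G V. \<exists>u\<in>U. g = n \<otimes> u)) small_subgroups"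
    using eventually_small_subgroups_base eventually_normalizer_factor[OF g U(1)] by (rule eventually_conj)
  then show ?thesis
  proof (rule eventually_mono)
    fix V assume "V \<in> B \<and> V \<subseteq> U \<and> (\<exists>n\<in>normalizer G V. \<exists>u\<in>U. g = n \<otimes> u)"
    then obtain n u where V: "subgroup V G" "V \<subseteq> U" and n: "n \<in> normalizer G V"
      and u: "u \<in> U" and gnu: "g = n \<otimes> u"
      using base_subgroup by blast
    interpret trace: group_hom "add_group X" "add_group X" "normalizer_trace G X act V"
      by (rule X.trace_group_hom)
    have nc: "n \<in> carrier G" using n by (rule normalizer_closed)
    have "act g y = act n y"
      using U(2) u gnu nc base_subgroup[OF U(1)] y X.act_mult
      by (auto simp: fixed_points_def subgroup.mem_carrier)
    moreover have "y \<in> fixed_points X act V" using U(2) V(2) by (auto simp: fixed_points_def)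
    moreover have "normalizer_trace G X act V (madd X (act n y) (inv\<^bsub>add_group X\<^esub> y)) =
        madd X (normalizer_trace G X act V (act n y)) (inv\<^bsub>add_group X\<^esub> (normalizer_trace G X act V y))"
      using trace.hom_mult[of "act n y" "inv\<^bsub>add_group X\<^esub> y"] trace.hom_inv[of y] X.act_closed[OF nc y] y
      by simp
    ultimately show "normalizer_trace G X act V (madd X (act g y) (inv\<^bsub>add_group X\<^esub> y)) = mzero X"
      using X.trace_normalizer_invariant[OF V(1) n] X.trace_closed y by simp
  qed
qed

lemma eventually_trace_aug_zero:
  assumes X: "smooth_module G T X act" and d: "d \<in> aug_submodule G X act"
  shows "eventually (\<lambda>V. normalizer_trace G X act V d = mzero X) small_subgroups"
proof -
  interpret X: linear_action G X act
    using smooth_module_linear_action[OF is_group X] .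
  show ?thesis
    using d
  proof induction
    case zero
    show ?case
      using group_hom.hom_one[OF X.trace_group_hom] by simp
  next
    case (diff_add g y d)
    have "eventually (\<lambda>V. normalizer_trace G X act V (madd X (act g y) (inv\<^bsub>add_group X\<^esub> y)) = mzero X
        \<and> normalizer_trace G X act V d = mzero X) small_subgroups"
      using eventually_trace_diff_zero[OF X diff_add.hyps(1,2)] diff_add.IH by (rule eventually_conj)
    then show ?case
      by (rule eventually_mono)
        (use diff_add X.diff_closed X.aug_subset X.zero_closed group_hom.hom_mult[OF X.trace_group_hom] in simp)
  qed
qed

lemma invariant_hom_vanishes_on_aug:
  assumes A: "smooth_module G T A actA" and Y: "smooth_module G T Y actY"
    and i: "smooth_hom G A actA Y actY i" "inj_on i (mcar A)"
    and M: "rQ_module M" and h: "smooth_hom G A actA M (\<lambda>g x. x) h"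
    and a: "a \<in> mcar A" "i a \<in> aug_submodule G Y actY"
  shows "h a = mzero M"
proof -
  interpret A: linear_action G A actA using smooth_module_linear_action[OF is_group A] .
  interpret Y: linear_action G Y actY using smooth_module_linear_action[OF is_group Y] .
  interpret M: rmodule M using M by (simp add: rQ_module_def rmodule_def)
  interpret M: linear_action G M "\<lambda>g x. x" using M.linear_action_trivial[OF is_group] .
  have "eventually (\<lambda>V. V \<in> B \<and> finite (normalizer_quotient G V)
      \<and> normalizer_trace G Y actY V (i a) = mzero Y) small_subgroups"
    using eventually_small_subgroups_base eventually_finite_normalizer_quotient
      eventually_trace_aug_zero[OF Y a(2)] by (intro eventually_conj)
  then obtain V where V: "subgroup V G" "finite (normalizer_quotient G V)"
    and trace_ia: "normalizer_trace G Y actY V (i a) = mzero Y"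
    using eventually_happens'[OF small_subgroups_neq_bot] base_subgroup by blast
  let ?trA = "normalizer_trace G A actA V" and ?k = "card (normalizer_quotient G V)"
  have il: "rlinear A Y i" and hl: "rlinear A M h"
    using i(1) h by (simp_all add: smooth_hom_def)
  have ha: "h a \<in> mcar M" using hl a(1) by (simp add: rlinear_def)
  have "i (?trA a) = i (mzero A)"
    using smooth_hom_trace_commute[OF A.linear_action_axioms Y.linear_action_axioms i(1) a(1)] trace_ia
      rlinear_zero[OF A.rmodule_axioms Y.rmodule_axioms il] by simp
  then have "?trA a = mzero A"
    using inj_onD[OF i(2) _ A.trace_closed[OF a(1)] A.zero_closed] by simp
  have "msc M (of_nat ?k) (h a) = h (?trA a)"
    using smooth_hom_trace_commute[OF A.linear_action_axioms M.linear_action_axioms h a(1)]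
      M.trace_trivial_action[OF ha, where G = G and V = V] by simp
  also have "\<dots> = mzero M"
    using \<open>?trA a = mzero A\<close> rlinear_zero[OF A.rmodule_axioms M.rmodule_axioms hl] by simp
  finally have "msc M (of_nat ?k) (h a) = mzero M" .
  moreover have "?k > 0"
  proof -
    have "\<one> \<in> normalizer G V"
      using normalizer_imp_subgroup[OF subgroup.subset[OF V(1)]] by (rule subgroup.one_closed)
    then have "V #> \<one> \<in> normalizer_quotient G V" by (simp add: normalizer_quotient_def)
    then show ?thesis using V(2) card_gt_0_iff by blast
  qed
  ultimately show ?thesis
    using rQ_module_eq_zero[OF M ha] by simp
qed

end

section \<open>Essential extensions and injectivity\<close>

context admissible_subgroup_base
begin

lemma essential_extension_trivial_action:
  assumes M: "rQ_module M" and ess: "essential_extension G T M (\<lambda>g x. x) E actE f"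
  shows "trivial_action G E actE"
  unfolding trivial_action_def
proof (intro ballI, rule ccontr)
  fix g x assume g: "g \<in> carrier G" and x: "x \<in> mcar E" and moved: "actE g x \<noteq> x"
  have smM: "smooth_module G T M (\<lambda>g x. x)" and smE: "smooth_module G T E actE"
    and f: "smooth_hom G M (\<lambda>g x. x) E actE f" "inj_on f (mcar M)"
    and essential: "\<And>S. smooth_submodule G E actE S \<Longrightarrow> S \<noteq> {mzero E} \<Longrightarrow>
      \<exists>x\<in>S. x \<noteq> mzero E \<and> x \<in> f ` mcar M"
    using ess unfolding essential_extension_def by blast+
  interpret E: linear_action G E actE using smooth_module_linear_action[OF is_group smE] .
  interpret M: rmodule M using M by (simp add: rQ_module_def rmodule_def)
  have "madd E (actE g x) (inv\<^bsub>add_group E\<^esub> x) \<noteq> mzero E"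
    using moved g x E.act_closed E.add.inv_equality[of "actE g x" "inv\<^bsub>add_group E\<^esub> x"] by auto
  then have "aug_submodule G E actE \<noteq> {mzero E}"
    using E.aug_diff[OF g x] by blast
  then obtain m where m: "m \<in> mcar M" "f m \<noteq> mzero E" "f m \<in> aug_submodule G E actE"
    using essential[OF E.aug_smooth_submodule] by blast
  have "smooth_hom G M (\<lambda>g x. x) M (\<lambda>g x. x) (\<lambda>x. x)"
    using M.is_rmodule by (simp add: smooth_hom_def rlinear_def is_rmodule_def)
  then have "m = mzero M"
    using invariant_hom_vanishes_on_aug[OF smM smE f M _ m(1,3)] by simp
  then show False
    using m(2) group_hom.hom_one[OF rlinear_group_hom[OF M.rmodule_axioms E.rmodule_axioms]] f(1)
    by (simp add: smooth_hom_def)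
qed

lemma smooth_injective_of_injective:
  fixes M :: "('r::ring_1, 'm) rmod"
  assumes M: "rQ_module M" and inj: "rmod_injective_in TYPE('m \<times> 'b) M"
  shows "smooth_injective_in TYPE('a) TYPE('b) G T M (\<lambda>g x. x)"
  unfolding smooth_injective_in_def
proof (intro conjI allI impI)
  interpret M: rmodule M using M by (simp add: rQ_module_def rmodule_def)
  show "smooth_module G T M (\<lambda>g x. x)"
    using smooth_module_trivial_action[OF topological_group M.is_rmodule] .
  fix A :: "('r, 'a) rmod" and Y :: "('r, 'b) rmod" and actA actY i h
  assume "smooth_module G T A actA \<and> smooth_module G T Y actY \<and>
    smooth_hom G A actA Y actY i \<and> inj_on i (mcar A) \<and> smooth_hom G A actA M (\<lambda>g x. x) h"
  then have A: "smooth_module G T A actA" and Y: "smooth_module G T Y actY"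
    and i: "smooth_hom G A actA Y actY i" "inj_on i (mcar A)"
    and h: "smooth_hom G A actA M (\<lambda>g x. x) h" by blast+
  interpret A: linear_action G A actA using smooth_module_linear_action[OF is_group A] .
  interpret Y: linear_action G Y actY using smooth_module_linear_action[OF is_group Y] .
  have il: "rlinear A Y i" and hl: "rlinear A M h"
    using i(1) h by (simp_all add: smooth_hom_def)
  obtain k where k: "rlinear Y M k" "\<forall>a\<in>mcar A. k (i a) = h a"
    and k_aug: "\<forall>d\<in>aug_submodule G Y actY. k d = mzero M"
    using injective_extends_modulo_submodule[OF A.rmodule_axioms Y.rmodule_axioms M.rmodule_axioms
        il hl Y.aug_rsubmodule invariant_hom_vanishes_on_aug[OF A Y i M h] inj]
    by blast
  have "k (actY g y) = k y" if g: "g \<in> carrier G" and y: "y \<in> mcar Y" for g y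
  proof -
    let ?t = "madd Y (actY g y) (inv\<^bsub>add_group Y\<^esub> y)"
    have "actY g y = madd Y ?t y"
      using Y.add_assoc[of "actY g y" "inv\<^bsub>add_group Y\<^esub> y" y] Y.act_closed[OF g y] y by simp
    then have "k (actY g y) = k (madd Y ?t y)" by simp
    also have "\<dots> = madd M (k ?t) (k y)"
      using k(1) Y.diff_closed[OF g y] y by (simp add: rlinear_def)
    also have "\<dots> = k y"
      using k_aug Y.aug_diff[OF g y] k(1) y M.zero_add by (simp add: rlinear_def)
    finally show ?thesis .
  qed
  then show "\<exists>k. smooth_hom G Y actY M (\<lambda>g x. x) k \<and> (\<forall>x\<in>mcar A. k (i x) = h x)"
    using k by (auto simp: smooth_hom_def)
qed

end

theorem lemmaA11:
  fixes G :: "('g, 'z) monoid_scheme" and T :: "'g topology" and B :: "'g set set"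
    and M :: "('r::ring_1, 'm) rmod"
  assumes "permutation_group G T"
    and "open_subgroup_base G T B"
    and "\<forall>U\<in>B. \<forall>V\<in>B. V \<subseteq> U \<longrightarrow>
           finite (normalizer_quotient G V) \<and> fixed_cosets G U V = normalizer_cosets G U V"
    and "rQ_module M"
  shows "(\<forall>(E :: ('r, 'e) rmod) actE f.
            essential_extension G T M (\<lambda>g x. x) E actE f \<longrightarrow> trivial_action G E actE)
       \<and> (rmod_injective_in TYPE('m \<times> 'b) M \<longrightarrow>
            smooth_injective_in TYPE('a) TYPE('b) G T M (\<lambda>g x. x))"
proof -
  interpret admissible_subgroup_base G T B
    using assms(1-3) by unfold_locales (auto simp: permutation_group_def)
  show ?thesis
    using essential_extension_trivial_action[OF assms(4)] smooth_injective_of_injective[OF assms(4)]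
    by blast
qed

end
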